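(* Assume (R), and let $(\mathbb P^n)_{n\ge1}\subset\mathcal P$ satisfy $\sup_nJ(\mathbb P^n)<\infty$. Define $\lambda_1^n(t):=\frac1d\mathrm{tr}(\bar\Sigma_2(t,X_t)^{-1}\Sigma^{\mathbb P^n}_t)$. Then $\sup_{n\ge1}\mathbb E^{\mathbb P^n}[\int_0^1\lambda_1^n(t)\log\lambda_1^n(t)\,dt]<\infty$ (convention $0\log0=0$).
   Context: $\Omega=C([0,1];\mathbb R^d)$, canonical process $X$. $\mathcal P$ is the set of probability measures $\mathbb P$ on $\Omega$ under which $X$ is a continuous local martingale with $\langle X\rangle_t=\int_0^t\Sigma^{\mathbb P}_sds$, $\Sigma^{\mathbb P}$ progressively measurable with values in $\mathbb S^d_+$. Continuous $\lambda_2:[0,1]\times\mathbb R^d\to(0,\infty)$, $\bar\Sigma_2:[0,1]\times\mathbb R^d\to\mathbb S^d_{++}$; (R): $\underline b\le\lambda_2\le\overline b$ and $\bar\Sigma_2\preceq MI_d$ for constants $0<\underline b\le\overline b$, $M>0$. For $\Sigma_1\in\mathbb S^d_+$, $\lambda_1:=\frac1d\mathrm{tr}(\bar\Sigma_2(t,x)^{-1}\Sigma_1)$, $\bar\Sigma_1:=\Sigma_1/\lambda_1$ if $\Sigma_1\ne0$; $\ell^{\mathrm{tr}}(t,x,\Sigma_1)=\lambda_1\log\frac{\lambda_1}{\lambda_2}-\lambda_1+\lambda_2-\frac{\lambda_1}2\log\det(\bar\Sigma_2^{-1}\bar\Sigma_1)$ on $\mathbb S^d_{++}$, $=\lambda_2(t,x)$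 at $\Sigma_1=0$, $=+\infty$ on singular nonzero $\Sigma_1$. $\xi:C([0,1];\mathbb R^d)\to\mathbb R$ bounded Borel, continuous for the uniform topology; $J(\mathbb P)=\mathbb E^{\mathbb P}[\int_0^1\ell^{\mathrm{tr}}(t,X_t,\Sigma^{\mathbb P}_t)dt+\xi(X)]$. *)

theory Defs
  imports "HOL-Probability.Probability"
begin

text \<open>A path is represented as a function real => real^'d that is continuous on [0,1]
  and constant outside [0,1] (extended by its end values); this is in bijection with C([0,1];R^d).
  The canonical process is X_t(w) = w t.\<close>

definition paths :: "(real \<Rightarrow> real^'d) set" where
  "paths = {w. continuous_on {0..1} w \<and> (\<forall>t. w t = w (min 1 (max 0 t)))}"

definition canF :: "real \<Rightarrow> (real \<Rightarrow> real^'d) measure" where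
  "canF t = sigma paths {{w \<in> paths. w s \<in> A} | s A. s \<in> {0..t} \<and> A \<in> sets borel}"

text \<open>Sigma-algebra on the path space: generated by the coordinates (= Borel sigma-algebra of the
  uniform topology on C([0,1];R^d)).\<close>
definition path_space :: "(real \<Rightarrow> real^'d) measure" where
  "path_space = canF 1"

definition unif_dist :: "(real \<Rightarrow> real^'d) \<Rightarrow> (real \<Rightarrow> real^'d) \<Rightarrow> real" where
  "unif_dist v w = (SUP t\<in>{0..1}. norm (v t - w t))"

definition martingale_on :: "(real \<Rightarrow> real^'d) measure \<Rightarrow> (real \<Rightarrow> (real \<Rightarrow> real^'d) \<Rightarrow> real) \<Rightarrow> bool" where
  "martingale_on P M \<longleftrightarrow>
     (\<forall>t\<in>{0..1}. integrable P (M t) \<and> M t \<in> borel_measurable (canF t)) \<and>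
     (\<forall>s t. 0 \<le> s \<longrightarrow> s \<le> t \<longrightarrow> t \<le> 1 \<longrightarrow>
        (\<forall>A\<in>sets (canF s). (LINT w:A|P. M t w) = (LINT w:A|P. M s w)))"

definition cont_local_martingale :: "(real \<Rightarrow> real^'d) measure \<Rightarrow> (real \<Rightarrow> (real \<Rightarrow> real^'d) \<Rightarrow> real) \<Rightarrow> bool" where
  "cont_local_martingale P M \<longleftrightarrow>
     (\<forall>t\<in>{0..1}. M t \<in> borel_measurable (canF t)) \<and>
     (AE w in P. continuous_on {0..1} (\<lambda>t. M t w)) \<and>
     (\<exists>\<tau> :: nat \<Rightarrow> (real \<Rightarrow> real^'d) \<Rightarrow> real.
        (\<forall>k. stopping_time canF (\<tau> k)) \<and>
        (\<forall>k. \<forall>w\<in>paths. 0 \<le> \<tau> k w \<and> \<tau> k w \<le> 1 \<and> \<tau> k w \<le> \<tau> (Suc k) w) \<and>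
        (AE w in P. \<exists>k. \<tau> k w = 1) \<and>
        (\<forall>k. martingale_on P (\<lambda>t w. M (min t (\<tau> k w)) w - M 0 w)))"

definition psd :: "real^'d^'d \<Rightarrow> bool" where
  "psd A \<longleftrightarrow> transpose A = A \<and> (\<forall>v. 0 \<le> v \<bullet> (A *v v))"

definition pd :: "real^'d^'d \<Rightarrow> bool" where
  "pd A \<longleftrightarrow> transpose A = A \<and> (\<forall>v. v \<noteq> 0 \<longrightarrow> 0 < v \<bullet> (A *v v))"

definition progressive :: "(real \<Rightarrow> (real \<Rightarrow> real^'d) \<Rightarrow> real^'d^'d) \<Rightarrow> bool" where
  "progressive \<Sigma> \<longleftrightarrow>
     (\<forall>t\<in>{0..1}. (\<lambda>(s, w). \<Sigma> s w) \<in> borel_measurable (restrict_space borel {0..t} \<Otimes>\<^sub>M canF t))"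

text \<open>The bracket condition is expressed by its defining property:
  int_0^1 |Sigma| < infinity a.s. and X^i X^j - int_0^. Sigma^{ij} is a continuous local martingale.\<close>
definition in_calP :: "(real \<Rightarrow> real^'d) measure \<Rightarrow> (real \<Rightarrow> (real \<Rightarrow> real^'d) \<Rightarrow> real^'d^'d) \<Rightarrow> bool" where
  "in_calP P \<Sigma> \<longleftrightarrow>
     prob_space P \<and> sets P = sets path_space \<and>
     progressive \<Sigma> \<and>
     (\<forall>t\<in>{0..1}. \<forall>w\<in>paths. psd (\<Sigma> t w)) \<and>
     (\<forall>i. cont_local_martingale P (\<lambda>t w. w t $ i)) \<and>
     (AE w in P. \<forall>i j. set_integrable lborel {0..1} (\<lambda>s. \<Sigma> s w $ i $ j)) \<and>
     (\<forall>i j. cont_local_martingale P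
        (\<lambda>t w. w t $ i * w t $ j - (LINT s:{0..t}|lborel. \<Sigma> s w $ i $ j)))"

definition lambda1 :: "(real \<Rightarrow> real^'d \<Rightarrow> real^'d^'d) \<Rightarrow> real \<Rightarrow> real^'d \<Rightarrow> real^'d^'d \<Rightarrow> real" where
  "lambda1 S2 t x S1 = trace (matrix_inv (S2 t x) ** S1) / real CARD('d)"

definition ell_tr :: "(real \<Rightarrow> real^'d \<Rightarrow> real) \<Rightarrow> (real \<Rightarrow> real^'d \<Rightarrow> real^'d^'d) \<Rightarrow>
    real \<Rightarrow> real^'d \<Rightarrow> real^'d^'d \<Rightarrow> ereal" where
  "ell_tr l2 S2 t x S1 =
     (if S1 = 0 then ereal (l2 t x)
      else if invertible S1 then
        (let l1 = lambda1 S2 t x S1; S1b = (1 / l1) *\<^sub>R S1 in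
         ereal (l1 * ln (l1 / l2 t x) - l1 + l2 t x
                - l1 / 2 * ln (det (matrix_inv (S2 t x) ** S1b))))
      else \<infinity>)"

definition qint :: "'a measure \<Rightarrow> ('a \<Rightarrow> ereal) \<Rightarrow> ereal" where
  "qint M f = enn2ereal (\<integral>\<^sup>+ x. e2ennreal (f x) \<partial>M) - enn2ereal (\<integral>\<^sup>+ x. e2ennreal (- f x) \<partial>M)"

definition J_obj :: "(real \<Rightarrow> real^'d \<Rightarrow> real) \<Rightarrow> (real \<Rightarrow> real^'d \<Rightarrow> real^'d^'d) \<Rightarrow>
    ((real \<Rightarrow> real^'d) \<Rightarrow> real) \<Rightarrow> (real \<Rightarrow> real^'d) measure \<Rightarrow>
    (real \<Rightarrow> (real \<Rightarrow> real^'d) \<Rightarrow> real^'d^'d) \<Rightarrow> ereal" where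
  "J_obj l2 S2 \<xi> P \<Sigma> = qint P (\<lambda>w.
      qint (restrict_space lborel {0..1}) (\<lambda>t. ell_tr l2 S2 t (w t) (\<Sigma> t w)) + ereal (\<xi> w))"

definition xlogx :: "real \<Rightarrow> real" where
  "xlogx x = (if x = 0 then 0 else x * ln x)"

end

theory Submission
  imports Defs
begin

text \<open>For invertible S1, AM-GM on the eigenvalues of the congruent matrix
  Sigma2^(-1/2) S1 Sigma2^(-1/2) gives det (Sigma2^(-1) S1 / lambda1) <= 1, so the log-det term of
  l^tr is nonnegative and l^tr >= lambda1 ln (lambda1 / lambda2) - lambda1 + lambda2. Since
  lambda2 <= bu, Young's inequality for x ln x absorbs the remaining linear term in lambda1 and yields
  the pointwise bound lambda1 ln lambda1 <= 2 l^tr + e bu^2. Integrating over [0,1] and then under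
  P^n, with xi bounded, gives the uniform bound in terms of sup_n J(P^n). Only the bounds of (R) on
  lambda2, positive definiteness of Sigma2 and boundedness of xi are needed: the estimate is pointwise,
  so no continuity or measurability of the integrands enters.\<close>

section \<open>Symmetric and positive semidefinite matrices\<close>

definition diag_mat :: "('n \<Rightarrow> real) \<Rightarrow> real^'n^'n" where
  "diag_mat \<mu> = (\<chi> i j. if i = j then \<mu> i else 0)"

lemma transpose_diag_mat [simp]: "transpose (diag_mat \<mu>) = diag_mat \<mu>"
  by (simp add: diag_mat_def transpose_def vec_eq_iff)

lemma diag_mat_mult_diag_mat: "diag_mat a ** diag_mat b = diag_mat (\<lambda>i. a i * b i)"
proof -
  have "(\<Sum>k\<in>UNIV. (if i = k then a i else 0) * (if k = j then b k else 0)) =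
      (if i = j then a i * b i else 0)" for i j
    by (simp add: if_distrib[of "\<lambda>x. _ * x"] cong: if_cong)
  then show ?thesis
    by (simp add: matrix_matrix_mult_def diag_mat_def vec_eq_iff)
qed

lemma diag_mat_1: "diag_mat (\<lambda>_. 1) = mat 1"
  by (simp add: diag_mat_def mat_def)

lemma det_diag_mat: "det (diag_mat \<mu>) = (\<Prod>i\<in>UNIV. \<mu> i)"
  by (subst det_diagonal) (auto simp: diag_mat_def)

lemma trace_diag_mat: "trace (diag_mat \<mu>) = (\<Sum>i\<in>UNIV. \<mu> i)"
  by (simp add: trace_def diag_mat_def)

lemma column_mult_diag_mat: "column i (A ** diag_mat \<mu>) = \<mu> i *\<^sub>R column i A"
proof -
  have "(\<Sum>j\<in>UNIV. A $ k $ j * (if j = i then \<mu> j else 0)) = \<mu> i * A $ k $ i" for k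
    by (simp add: if_distrib[of "\<lambda>x. _ * x"] mult.commute cong: if_cong)
  then show ?thesis
    by (simp add: matrix_matrix_mult_def diag_mat_def column_def vec_eq_iff)
qed

lemma column_matrix_mult: "column i (A ** B) = A *v column i B"
  by (simp add: column_def matrix_matrix_mult_def matrix_vector_mult_def vec_eq_iff)

lemma symmetric_matrix_inner_commute:
  fixes A :: "real^'n^'n"
  assumes "transpose A = A"
  shows "x \<bullet> (A *v y) = (A *v x) \<bullet> y"
  by (metis assms dot_lmul_matrix transpose_matrix_vector)

lemma nonpos_if_le_all_multiples:
  fixes a b :: real
  assumes "\<And>e. 0 < e \<Longrightarrow> a \<le> e * b"
  shows "a \<le> 0"
proof (rule ccontr)
  assume "\<not> a \<le> 0"
  then have a: "0 < a" by simp
  define e where "e = a / (2 * (\<bar>b\<bar> + 1))"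
  have e: "0 < e" using a by (simp add: e_def)
  have "a \<le> e * \<bar>b\<bar>" using assms[OF e] e by (meson abs_ge_self mult_left_mono order_trans less_imp_le)
  also have "\<dots> < e * (2 * (\<bar>b\<bar> + 1))" using e by (intro mult_strict_left_mono) auto
  also have "\<dots> = a" by (simp add: e_def)
  finally show False by simp
qed

text \<open>Perturbing v along the component w of A v orthogonal to v raises the quadratic form by
  2 e |w|^2 + O(e^2), so maximality forces w = 0.\<close>
lemma symmetric_matrix_maximiser_is_eigenvector:
  fixes A :: "real^'n^'n"
  assumes sym: "transpose A = A" and W: "subspace W" and inv: "\<And>x. x \<in> W \<Longrightarrow> A *v x \<in> W"
    and vW: "v \<in> W" and nv: "norm v = 1"
    and maximal: "\<And>x. x \<in> W \<Longrightarrow> norm x = 1 \<Longrightarrow> x \<bullet> (A *v x) \<le> v \<bullet> (A *v v)"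
  shows "A *v v = (v \<bullet> (A *v v)) *\<^sub>R v"
proof -
  define m where "m = v \<bullet> (A *v v)"
  define w where "w = A *v v - m *\<^sub>R v"
  have vv: "v \<bullet> v = 1" using nv by (simp add: norm_eq_1)
  have wW: "w \<in> W" unfolding w_def using W inv[OF vW] vW by (simp add: subspace_diff subspace_scale)
  have vw: "v \<bullet> w = 0" unfolding w_def m_def by (simp add: inner_diff_right vv)
  have vAw: "v \<bullet> (A *v w) = w \<bullet> w"
    using symmetric_matrix_inner_commute[OF sym, of v w]
    by (simp add: w_def inner_diff_left inner_diff_right m_def vv inner_commute)
  have "2 * (w \<bullet> w) \<le> e * (m * (w \<bullet> w) - w \<bullet> (A *v w))" if e: "0 < e" for e
  proof -
    define x where "x = v + e *\<^sub>R w"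
    have xx: "x \<bullet> x = 1 + e\<^sup>2 * (w \<bullet> w)"
      unfolding x_def by (simp add: inner_add_left inner_add_right vv vw inner_commute power2_eq_square)
    then have "0 < x \<bullet> x" by (simp add: add_pos_nonneg)
    then have nx: "0 < norm x" by simp
    have "x /\<^sub>R norm x \<in> W" using W vW wW unfolding x_def by (simp add: subspace_scale subspace_add)
    from maximal[OF this] nx have "(x \<bullet> (A *v x)) / (norm x)\<^sup>2 \<le> m"
      by (simp add: m_def matrix_vector_mult_scaleR power2_eq_square divide_inverse mult.assoc,
          simp only: mult_ac)
    then have "x \<bullet> (A *v x) \<le> m * (x \<bullet> x)"
      using nx by (simp add: divide_le_eq power2_norm_eq_inner)
    moreover have "x \<bullet> (A *v x) = m + 2 * e * (w \<bullet> w) + e\<^sup>2 * (w \<bullet> (A *v w))"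
      using vAw symmetric_matrix_inner_commute[OF sym, of w v] inner_commute[of "A *v w" v]
      by (simp add: x_def matrix_vector_right_distrib matrix_vector_mult_scaleR inner_add_left
          inner_add_right m_def power2_eq_square algebra_simps)
    ultimately have "e * (2 * (w \<bullet> w)) \<le> e * (e * (m * (w \<bullet> w) - w \<bullet> (A *v w)))"
      unfolding xx by (simp add: algebra_simps power2_eq_square)
    then show ?thesis using e by simp
  qed
  then have "2 * (w \<bullet> w) \<le> 0" by (rule nonpos_if_le_all_multiples)
  then have "w = 0" using inner_ge_zero[of w] by simp
  then show ?thesis by (simp add: w_def m_def)
qed

lemma symmetric_matrix_eigenvector_in_invariant_subspace:
  fixes A :: "real^'n^'n"
  assumes sym: "transpose A = A" and W: "subspace W" and inv: "\<And>x. x \<in> W \<Longrightarrow> A *v x \<in> W"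
    and ne: "W \<noteq> {0}"
  shows "\<exists>v\<in>W. norm v = 1 \<and> A *v v = (v \<bullet> (A *v v)) *\<^sub>R v"
proof -
  let ?K = "W \<inter> sphere 0 1"
  obtain y where y: "y \<in> W" "y \<noteq> 0" using ne W subspace_0 by blast
  then have "y /\<^sub>R norm y \<in> ?K" using W by (auto simp: subspace_scale)
  moreover have "compact ?K" by (simp add: W closed_subspace closed_Int_compact)
  moreover have "continuous_on ?K (\<lambda>x. x \<bullet> (A *v x))"
    by (intro continuous_intros linear_continuous_on matrix_vector_mul_linear)
  ultimately obtain v where "v \<in> ?K" and "\<And>x. x \<in> ?K \<Longrightarrow> x \<bullet> (A *v x) \<le> v \<bullet> (A *v v)"
    using continuous_attains_sup[of ?K] by blast
  then show ?thesis
    using symmetric_matrix_maximiser_is_eigenvector[OF sym W inv] by auto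
qed

lemma symmetric_matrix_orthonormal_eigenvectors:
  fixes A :: "real^'n^'n"
  assumes sym: "transpose A = A"
  shows "k \<le> CARD('n) \<Longrightarrow> \<exists>S. finite S \<and> card S = k \<and> pairwise orthogonal S \<and>
      (\<forall>x\<in>S. norm x = 1 \<and> A *v x = (x \<bullet> (A *v x)) *\<^sub>R x)"
proof (induction k)
  case 0
  show ?case by (intro exI[of _ "{}"]) auto
next
  case (Suc k)
  then obtain S where S: "finite S" "card S = k" "pairwise orthogonal S"
      "\<forall>x\<in>S. norm x = 1 \<and> A *v x = (x \<bullet> (A *v x)) *\<^sub>R x" by auto
  define W where "W = {y. \<forall>x\<in>S. orthogonal x y}"
  have W: "subspace W" unfolding W_def by (rule subspace_orthogonal_to_vectors)
  have invW: "A *v y \<in> W" if "y \<in> W" for y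
    unfolding W_def mem_Collect_eq
  proof
    fix x assume x: "x \<in> S"
    have "x \<bullet> (A *v y) = (A *v x) \<bullet> y" by (rule symmetric_matrix_inner_commute[OF sym])
    also have "\<dots> = (x \<bullet> (A *v x)) * (x \<bullet> y)" using S(4) x by (metis inner_scaleR_left)
    also have "\<dots> = 0" using x that unfolding W_def orthogonal_def by simp
    finally show "orthogonal x (A *v y)" unfolding orthogonal_def .
  qed
  have "0 \<notin> S" using S(4) by auto
  then have indS: "independent S" using S(3) pairwise_orthogonal_independent by blast
  have "span S \<noteq> UNIV"
  proof
    assume "span S = UNIV"
    then have "dim (UNIV :: (real^'n) set) = dim S" by (metis dim_span)
    also have "\<dots> = k" using dim_eq_card_independent[OF indS] S(2) by simp
    finally show False using Suc.prems by simp
  qed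
  then obtain y where y: "y \<notin> span S" by blast
  obtain p z where p: "p \<in> span S" and z: "\<And>x. x \<in> span S \<Longrightarrow> orthogonal z x" and yz: "y = p + z"
    using orthogonal_subspace_decomp_exists by blast
  have "z \<in> W" unfolding W_def using z span_base orthogonal_commute by blast
  moreover have "z \<noteq> 0" using y p yz by auto
  ultimately obtain v where v: "v \<in> W" "norm v = 1" "A *v v = (v \<bullet> (A *v v)) *\<^sub>R v"
    using symmetric_matrix_eigenvector_in_invariant_subspace[OF sym W invW] by blast
  have "v \<notin> S"
  proof
    assume "v \<in> S"
    then have "v \<bullet> v = 0" using v(1) unfolding W_def orthogonal_def by auto
    then show False using v(2) by simp
  qed
  moreover have "pairwise orthogonal (insert v S)"
    using S(3) v(1) unfolding W_def pairwise_insert by (auto simp: orthogonal_commute)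
  ultimately show ?case
    using S v \<open>v \<notin> S\<close> by (intro exI[of _ "insert v S"]) simp
qed

theorem symmetric_matrix_diagonalization:
  fixes A :: "real^'n^'n"
  assumes sym: "transpose A = A"
  shows "\<exists>U \<mu>. orthogonal_matrix U \<and> A ** U = U ** diag_mat \<mu>"
proof -
  obtain S where S: "finite S" "card S = CARD('n)" "pairwise orthogonal S"
      "\<forall>x\<in>S. norm x = 1 \<and> A *v x = (x \<bullet> (A *v x)) *\<^sub>R x"
    using symmetric_matrix_orthonormal_eigenvectors[OF sym, of "CARD('n)"] by auto
  then obtain h where h: "bij_betw h (UNIV::'n set) S"
    using finite_same_card_bij[of "UNIV::'n set" S] by auto
  define U :: "real^'n^'n" where "U = (\<chi> i j. h j $ i)"
  define \<mu> where "\<mu> j = h j \<bullet> (A *v h j)" for j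
  have col: "column j U = h j" for j by (simp add: U_def column_def vec_eq_iff)
  have hS: "h j \<in> S" for j using h bij_betwE by blast
  have "h i \<noteq> h j" if "i \<noteq> j" for i j
    using h that by (metis UNIV_I bij_betw_iff_bijections)
  then have "orthogonal (h i) (h j)" if "i \<noteq> j" for i j
    using S(3) hS that unfolding pairwise_def by blast
  then have "orthogonal_matrix U"
    using S(4) hS by (simp add: orthogonal_matrix_orthonormal_columns col)
  moreover have "column j (A ** U) = column j (U ** diag_mat \<mu>)" for j
    using S(4) hS by (simp add: column_matrix_mult[of _ A] column_mult_diag_mat col \<mu>_def)
  then have "A ** U = U ** diag_mat \<mu>"
    by (simp add: column_def vec_eq_iff)
  ultimately show ?thesis by blast
qed

lemma symmetric_matrix_orthogonal_congruence_diag: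
  fixes A :: "real^'n^'n"
  assumes "transpose A = A"
  shows "\<exists>U \<mu>. orthogonal_matrix U \<and> transpose U ** A ** U = diag_mat \<mu> \<and>
           (\<forall>i. norm (column i U) = 1 \<and> \<mu> i = column i U \<bullet> (A *v column i U))"
proof -
  obtain U \<mu> where U: "orthogonal_matrix U" and AU: "A ** U = U ** diag_mat \<mu>"
    using symmetric_matrix_diagonalization[OF assms] by blast
  have "transpose U ** A ** U = transpose U ** U ** diag_mat \<mu>"
    by (simp add: matrix_mul_assoc[symmetric] AU)
  also have "\<dots> = diag_mat \<mu>" using U by (simp add: orthogonal_matrix)
  finally have "transpose U ** A ** U = diag_mat \<mu>" .
  moreover have "norm (column i U) = 1" for i
    using U by (simp add: orthogonal_matrix_orthonormal_columns)
  moreover have "A *v column i U = \<mu> i *\<^sub>R column i U" for i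
    using arg_cong[OF AU, of "column i"] by (simp add: column_matrix_mult[of _ A] column_mult_diag_mat)
  ultimately show ?thesis
    using U by (intro exI[of _ U] exI[of _ \<mu>]) (simp add: norm_eq_1)
qed

lemma prod_le_mean_power:
  fixes x :: "'a \<Rightarrow> real"
  assumes S: "finite S" "S \<noteq> {}" and x: "\<And>i. i \<in> S \<Longrightarrow> 0 \<le> x i"
  shows "(\<Prod>i\<in>S. x i) \<le> ((\<Sum>i\<in>S. x i) / card S) ^ card S"
proof (cases "(\<Prod>i\<in>S. x i) = 0")
  case True
  then show ?thesis using x by (simp add: sum_nonneg)
next
  case False
  then have P: "0 < (\<Prod>i\<in>S. x i)" using x by (simp add: less_le prod_nonneg)
  have "((\<Prod>i\<in>S. x i) powr (1 / card S)) ^ card S = ((\<Prod>i\<in>S. x i) powr (1 / card S)) powr card S"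
    using P by (simp add: powr_realpow)
  also have "\<dots> = (\<Prod>i\<in>S. x i)" using P S by (simp add: powr_powr)
  finally have "(\<Prod>i\<in>S. x i) = ((\<Prod>i\<in>S. x i) powr (1 / card S)) ^ card S" ..
  also have "\<dots> \<le> ((\<Sum>i\<in>S. x i) / card S) ^ card S"
    using arith_geom_mean[OF S x] by (intro power_mono) (simp_all add: sum_divide_distrib)
  finally show ?thesis .
qed

lemma orthogonal_congruence_det: "orthogonal_matrix U \<Longrightarrow> det (transpose U ** A ** U) = det A"
  for A U :: "real^'n^'n"
proof -
  assume "orthogonal_matrix U"
  then have "det U * det U = 1" using det_orthogonal_matrix[of U] by auto
  then show ?thesis by (simp add: det_mul)
qed

lemma orthogonal_congruence_trace: "orthogonal_matrix U \<Longrightarrow> trace (transpose U ** A ** U) = trace A"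
  for A U :: "real^'n^'n"
proof -
  assume "orthogonal_matrix U"
  then have "U ** transpose U = mat 1" by (simp add: orthogonal_matrix_def)
  moreover have "trace (transpose U ** A ** U) = trace (U ** transpose U ** A)"
    by (simp only: trace_mul_sym[of _ U] matrix_mul_assoc)
  ultimately show ?thesis by simp
qed

lemma psd_det_trace:
  fixes A :: "real^'n^'n"
  assumes "psd A"
  shows "0 \<le> det A" "0 \<le> trace A" "det A \<le> (trace A / CARD('n)) ^ CARD('n)"
proof -
  obtain U \<mu> where U: "orthogonal_matrix U" and D: "transpose U ** A ** U = diag_mat \<mu>"
    and \<mu>: "\<And>i. \<mu> i = column i U \<bullet> (A *v column i U)"
    using assms symmetric_matrix_orthogonal_congruence_diag[of A] unfolding psd_def by blast
  have \<mu>0: "0 \<le> \<mu> i" for i using assms unfolding psd_def \<mu> by blast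
  have det: "det A = (\<Prod>i\<in>UNIV. \<mu> i)"
    using orthogonal_congruence_det[OF U, of A] by (simp add: D det_diag_mat)
  have tr: "trace A = (\<Sum>i\<in>UNIV. \<mu> i)"
    using orthogonal_congruence_trace[OF U, of A] by (simp add: D trace_diag_mat)
  show "0 \<le> det A" unfolding det using \<mu>0 by (simp add: prod_nonneg)
  show "0 \<le> trace A" unfolding tr using \<mu>0 by (simp add: sum_nonneg)
  show "det A \<le> (trace A / CARD('n)) ^ CARD('n)"
    unfolding det tr using prod_le_mean_power[of UNIV \<mu>] \<mu>0 by simp
qed

lemma det_scaleR: "det (c *\<^sub>R A) = c ^ CARD('n) * det (A::real^'n^'n)"
proof -
  have "diag_mat (\<lambda>_. c) = c *\<^sub>R (mat 1 :: real^'n^'n)"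
    by (simp add: diag_mat_def mat_def vec_eq_iff)
  then have "c *\<^sub>R A = diag_mat (\<lambda>_. c) ** A"
    by (simp add: scalar_matrix_assoc[symmetric])
  then show ?thesis by (simp add: det_mul det_diag_mat)
qed

lemma psd_congruence:
  fixes S C :: "real^'n^'n"
  assumes "psd S"
  shows "psd (transpose C ** S ** C)"
proof -
  have "v \<bullet> ((transpose C ** S ** C) *v v) = v \<bullet> (transpose C *v (S *v (C *v v)))" for v
    by (simp only: matrix_vector_mul_assoc matrix_mul_assoc)
  also have "v \<bullet> (transpose C *v w) = (C *v v) \<bullet> w" for v w
    by (metis dot_lmul_matrix inner_commute transpose_matrix_vector)
  finally have "v \<bullet> ((transpose C ** S ** C) *v v) = (C *v v) \<bullet> (S *v (C *v v))" for v .
  moreover have "transpose (transpose C ** S ** C) = transpose C ** S ** C"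
    using assms by (simp add: psd_def matrix_transpose_mul matrix_mul_assoc)
  ultimately show ?thesis
    using assms by (simp add: psd_def)
qed

lemma matrix_inv_unique:
  fixes A B :: "real^'n^'n"
  assumes AB: "A ** B = mat 1"
  shows "matrix_inv A = B"
proof -
  have BA: "B ** A = mat 1" using AB matrix_left_right_inverse by blast
  then have "\<exists>A'. A ** A' = mat 1 \<and> A' ** A = mat 1" using AB by blast
  then have "A ** matrix_inv A = mat 1 \<and> matrix_inv A ** A = mat 1"
    unfolding matrix_inv_def by (rule someI_ex)
  then have "matrix_inv A = (B ** A) ** matrix_inv A" using BA by simp
  also have "\<dots> = B" using \<open>A ** matrix_inv A = mat 1 \<and> _\<close> by (simp add: matrix_mul_assoc[symmetric])
  finally show ?thesis .
qed

lemma pd_congruent_identity: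
  fixes Q :: "real^'n^'n"
  assumes "pd Q"
  shows "\<exists>C::real^'n^'n. transpose C ** Q ** C = mat 1"
proof -
  obtain U q where U: "orthogonal_matrix U" and D: "transpose U ** Q ** U = diag_mat q"
    and q: "\<And>i. norm (column i U) = 1 \<and> q i = column i U \<bullet> (Q *v column i U)"
    using assms symmetric_matrix_orthogonal_congruence_diag[of Q] unfolding pd_def by blast
  have q0: "0 < q i" for i
    using assms q[of i] unfolding pd_def by (metis norm_zero zero_neq_one)
  define C where "C = U ** diag_mat (\<lambda>i. 1 / sqrt (q i))"
  have "transpose C ** Q ** C =
      diag_mat (\<lambda>i. 1 / sqrt (q i)) ** (transpose U ** Q ** U) ** diag_mat (\<lambda>i. 1 / sqrt (q i))"
    by (simp add: C_def matrix_transpose_mul matrix_mul_assoc)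
  also have "\<dots> = diag_mat (\<lambda>i. 1 / sqrt (q i)) ** diag_mat q ** diag_mat (\<lambda>i. 1 / sqrt (q i))"
    by (simp only: D)
  also have "\<dots> = mat 1"
    using q0 by (simp add: diag_mat_mult_diag_mat diag_mat_1[symmetric] abs_of_pos[OF q0] less_le)
  finally show ?thesis by blast
qed

lemma pd_inverse_mult_det_trace:
  fixes Q S :: "real^'n^'n"
  assumes Q: "pd Q" and S: "psd S" "invertible S"
  shows "0 < det (matrix_inv Q ** S)" "0 < trace (matrix_inv Q ** S)"
    "det (matrix_inv Q ** S) \<le> (trace (matrix_inv Q ** S) / CARD('n)) ^ CARD('n)"
proof -
  obtain C :: "real^'n^'n" where CQC: "transpose C ** Q ** C = mat 1"
    using pd_congruent_identity[OF Q] by blast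
  then have "C ** (transpose C ** Q) = mat 1"
    using matrix_left_right_inverse by (metis matrix_mul_assoc)
  then have "Q ** (C ** transpose C) = mat 1"
    using matrix_left_right_inverse by (metis matrix_mul_assoc)
  then have inv: "matrix_inv Q = C ** transpose C" by (rule matrix_inv_unique)
  have "det C \<noteq> 0" using arg_cong[OF CQC, of det] by (auto simp: det_mul)
  then have "det (transpose C ** S ** C) \<noteq> 0"
    using S(2) by (simp add: det_mul invertible_det_nz)
  moreover have "det (matrix_inv Q ** S) = det (transpose C ** S ** C)"
    by (simp add: inv det_mul)
  moreover have "trace (matrix_inv Q ** S) = trace (transpose C ** S ** C)"
  proof -
    have "trace (matrix_inv Q ** S) = trace (C ** (transpose C ** S))"
      by (simp only: inv matrix_mul_assoc)
    also have "\<dots> = trace (transpose C ** S ** C)" by (rule trace_mul_sym)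
    finally show ?thesis .
  qed
  moreover note psd_det_trace[OF psd_congruence[OF S(1)], of C]
  ultimately have det: "0 < det (matrix_inv Q ** S)"
    and le: "det (matrix_inv Q ** S) \<le> (trace (matrix_inv Q ** S) / CARD('n)) ^ CARD('n)"
    and tr: "0 \<le> trace (matrix_inv Q ** S)"
    by (simp_all add: less_le)
  show "0 < det (matrix_inv Q ** S)" by (fact det)
  show "det (matrix_inv Q ** S) \<le> (trace (matrix_inv Q ** S) / CARD('n)) ^ CARD('n)" by (fact le)
  show "0 < trace (matrix_inv Q ** S)"
  proof (rule ccontr)
    assume "\<not> 0 < trace (matrix_inv Q ** S)"
    then have "trace (matrix_inv Q ** S) = 0" using tr by simp
    then show False using det le by (simp add: power_0_left)
  qed
qed

section \<open>The pointwise entropy bound\<close>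

definition rel_entropy :: "real \<Rightarrow> real \<Rightarrow> real" where
  "rel_entropy L l = L * ln (L / l) - L + l"

lemma rel_entropy_nonneg:
  assumes "0 < L" "0 < l"
  shows "0 \<le> rel_entropy L l"
proof -
  have "ln (l / L) \<le> l / L - 1" using assms by (intro ln_le_minus_one) simp
  then have "L * (1 - l / L) \<le> L * ln (L / l)"
    using assms by (intro mult_left_mono) (simp_all add: ln_div)
  then show ?thesis using assms by (simp add: rel_entropy_def algebra_simps)
qed

text \<open>Young's inequality for the convex conjugate pair L ln L and exp (y - 1).\<close>
lemma mult_le_xlnx_plus_exp:
  fixes L y :: real
  assumes "0 < L"
  shows "y * L \<le> L * ln L + exp (y - 1)"
proof -
  have "ln (exp (y - 1) / L) \<le> exp (y - 1) / L - 1" using assms by (intro ln_le_minus_one) simp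
  then have "L * (y - 1 - ln L) \<le> L * (exp (y - 1) / L - 1)"
    using assms by (intro mult_left_mono) (simp_all add: ln_div)
  then show ?thesis using assms by (simp add: algebra_simps)
qed

lemma xlnx_le_rel_entropy:
  fixes L l b :: real
  assumes L: "0 < L" and l: "0 < l" "l \<le> b"
  shows "L * ln L \<le> 2 * rel_entropy L l + exp 1 * b\<^sup>2"
proof -
  have "L * ln L = rel_entropy L l + L * (ln l + 1) - l"
    using L l by (simp add: rel_entropy_def ln_div algebra_simps)
  also have "\<dots> \<le> rel_entropy L l + L * (ln b + 1)"
  proof -
    have "L * (ln l + 1) \<le> L * (ln b + 1)" using L l by (intro mult_left_mono) auto
    then show ?thesis using l by linarith
  qed
  finally have "2 * (L * ln L) \<le> 2 * rel_entropy L l + 2 * (ln b + 1) * L"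
    by (simp add: algebra_simps)
  moreover have "2 * (ln b + 1) * L \<le> L * ln L + exp (2 * ln b + 1)"
    using mult_le_xlnx_plus_exp[OF L, of "2 * (ln b + 1)"] by (simp add: algebra_simps)
  moreover have "exp (2 * ln b + 1) = exp 1 * b\<^sup>2"
  proof -
    have "exp (2 * ln b + 1) = exp (ln b) * exp (ln b) * exp 1"
      by (simp only: mult_2 exp_add)
    then show ?thesis using l by (simp add: power2_eq_square)
  qed
  ultimately show ?thesis by simp
qed

lemma rel_entropy_le_ell_tr:
  fixes S2 :: "real \<Rightarrow> real^'d \<Rightarrow> real^'d^'d"
  assumes Q: "pd (S2 t x)" and S: "psd S1" "invertible S1"
  shows "0 < lambda1 S2 t x S1"
    and "ereal (rel_entropy (lambda1 S2 t x S1) (l2 t x)) \<le> ell_tr l2 S2 t x S1"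
proof -
  let ?L = "lambda1 S2 t x S1" and ?A = "matrix_inv (S2 t x) ** S1"
  note det_trace = pd_inverse_mult_det_trace[of "S2 t x" S1, OF Q S]
  show L: "0 < ?L" using det_trace(2) by (simp add: lambda1_def)
  define D where "D = det (matrix_inv (S2 t x) ** ((1 / ?L) *\<^sub>R S1))"
  have D_eq: "D = det ?A / ?L ^ CARD('d)"
    by (simp add: D_def matrix_scalar_ac scalar_matrix_assoc[symmetric] det_scaleR power_one_over)
  have "0 < D" using det_trace(1) L by (simp add: D_eq)
  moreover have "D \<le> 1"
    using det_trace(3) L by (simp add: D_eq lambda1_def)
  ultimately have "ln D \<le> 0" by simp
  moreover have "S1 \<noteq> 0"
    using S(2) det_0 by (auto simp: invertible_det_nz simp del: det_0)
  then have "ell_tr l2 S2 t x S1 = ereal (rel_entropy ?L (l2 t x) - ?L / 2 * ln D)"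
    using S(2) by (simp add: ell_tr_def D_def rel_entropy_def Let_def)
  ultimately show "ereal (rel_entropy ?L (l2 t x)) \<le> ell_tr l2 S2 t x S1"
    using L by (simp add: mult_nonneg_nonpos)
qed

lemma ell_tr_bounds:
  fixes S2 :: "real \<Rightarrow> real^'d \<Rightarrow> real^'d^'d"
  assumes Q: "pd (S2 t x)" and S: "psd S1" and l: "0 < l2 t x" "l2 t x \<le> b"
  shows "0 \<le> ell_tr l2 S2 t x S1"
    and "ereal (xlogx (lambda1 S2 t x S1)) \<le> 2 * ell_tr l2 S2 t x S1 + ereal (exp 1 * b\<^sup>2)"
proof -
  let ?L = "lambda1 S2 t x S1"
  consider "S1 = 0" | "S1 \<noteq> 0" "invertible S1" | "S1 \<noteq> 0" "\<not> invertible S1" by blast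
  then have "0 \<le> ell_tr l2 S2 t x S1 \<and>
      ereal (xlogx ?L) \<le> 2 * ell_tr l2 S2 t x S1 + ereal (exp 1 * b\<^sup>2)"
  proof cases
    case 1
    then have "?L = 0" by (simp add: lambda1_def trace_def)
    then show ?thesis using 1 l by (simp add: ell_tr_def xlogx_def)
  next
    case 2
    note L = rel_entropy_le_ell_tr(1)[of S2 t x S1, OF Q S 2(2)]
      rel_entropy_le_ell_tr(2)[of S2 t x S1 l2, OF Q S 2(2)]
    have "0 \<le> rel_entropy ?L (l2 t x)" using L(1) l(1) by (rule rel_entropy_nonneg)
    moreover have "xlogx ?L \<le> 2 * rel_entropy ?L (l2 t x) + exp 1 * b\<^sup>2"
      using xlnx_le_rel_entropy[OF L(1) l] L(1) by (simp add: xlogx_def)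
    ultimately show ?thesis using L(2) by (cases "ell_tr l2 S2 t x S1") auto
  next
    case 3
    then show ?thesis by (simp add: ell_tr_def)
  qed
  then show "0 \<le> ell_tr l2 S2 t x S1"
    and "ereal (xlogx ?L) \<le> 2 * ell_tr l2 S2 t x S1 + ereal (exp 1 * b\<^sup>2)" by auto
qed

section \<open>Quasi-integrals of non-measurable integrands\<close>

text \<open>No measurability is assumed: an affine image of a simple function below c g + K is a
  simple function below g.\<close>
lemma nn_integral_affine_le:
  fixes g :: "'a \<Rightarrow> ennreal" and c K :: ennreal
  assumes c: "c \<noteq> 0" "c \<noteq> \<infinity>" and K: "K \<noteq> \<infinity>"
  shows "(\<integral>\<^sup>+x. c * g x + K \<partial>M) \<le> c * integral\<^sup>N M g + K * emeasure M (space M)"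
  unfolding nn_integral_def[of M "\<lambda>x. c * g x + K"]
proof (intro SUP_least, clarify)
  fix s assume s: "simple_function M s" "s \<le> (\<lambda>x. c * g x + K)"
  define s' where "s' = (\<lambda>y. (y - K) / c) \<circ> s"
  have s': "simple_function M s'" unfolding s'_def using s(1) by (rule simple_function_compose)
  have "s' \<le> g"
  proof (rule le_funI)
    fix x
    have "s x - K \<le> c * g x" using s(2) K by (simp add: le_fun_def ennreal_minus_le_iff add.commute)
    then show "s' x \<le> g x"
      using c by (simp add: s'_def divide_le_posI_ennreal zero_less_iff_neq_zero)
  qed
  then have "integral\<^sup>S M s' \<le> integral\<^sup>N M g"
    unfolding nn_integral_def using s' by (intro SUP_upper) auto
  have "s x \<le> c * s' x + K" for x
  proof -
    have "c * s' x = s x - K"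
      using c by (simp add: s'_def ennreal_times_divide mult.commute[of c] mult_divide_eq_ennreal)
    then show ?thesis by (simp add: diff_add_self_ennreal less_imp_le not_le)
  qed
  then have "integral\<^sup>S M s \<le> integral\<^sup>S M (\<lambda>x. c * s' x + K)"
    using s(1) s' by (intro simple_integral_mono) auto
  also have "\<dots> = c * integral\<^sup>S M s' + K * emeasure M (space M)"
    using s' by (subst simple_integral_add) auto
  also have "\<dots> \<le> c * integral\<^sup>N M g + K * emeasure M (space M)"
    using \<open>integral\<^sup>S M s' \<le> integral\<^sup>N M g\<close> by (intro add_right_mono mult_left_mono) auto
  finally show "integral\<^sup>S M s \<le> c * integral\<^sup>N M g + K * emeasure M (space M)" .
qed

lemma e2ennreal_affine_le:
  assumes "f \<le> ereal c * g + ereal K" "0 \<le> c" "0 \<le> K"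
  shows "e2ennreal f \<le> ennreal c * e2ennreal g + ennreal K"
proof -
  have "ereal c * g \<le> ereal c * max 0 g" using assms(2) by (intro ereal_mult_left_mono) auto
  then have "f \<le> ereal c * max 0 g + ereal K" using assms(1) by (metis add_right_mono order_trans)
  also have "\<dots> = enn2ereal (ennreal c * e2ennreal g + ennreal K)"
    using assms by (cases "0 \<le> g")
      (simp_all add: plus_ennreal.rep_eq times_ennreal.rep_eq enn2ereal_e2ennreal e2ennreal_neg
        zero_ennreal.rep_eq max_def)
  finally show ?thesis by (metis e2ennreal_enn2ereal e2ennreal_mono)
qed

lemma qint_le_nn_integral_pos: "qint M f \<le> enn2ereal (\<integral>\<^sup>+x. e2ennreal (f x) \<partial>M)"
  unfolding qint_def by (simp add: ereal_diff_le_self)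

lemma qint_nonneg:
  assumes "\<And>x. x \<in> space M \<Longrightarrow> 0 \<le> f x"
  shows "0 \<le> qint M f"
proof -
  have "(\<integral>\<^sup>+x. e2ennreal (- f x) \<partial>M) = 0"
    using assms by (simp add: nn_integral_cong[where v = "\<lambda>_. 0"] e2ennreal_neg)
  then show ?thesis unfolding qint_def by (simp add: zero_ennreal.rep_eq)
qed

lemma nn_integral_pos_le_qint:
  assumes M: "prob_space M" and a: "0 \<le> a" and g: "\<And>x. x \<in> space M \<Longrightarrow> - ereal a \<le> g x"
  shows "enn2ereal (\<integral>\<^sup>+x. e2ennreal (g x) \<partial>M) \<le> qint M g + ereal a"
proof -
  have "(\<integral>\<^sup>+x. e2ennreal (- g x) \<partial>M) \<le> (\<integral>\<^sup>+x. ennreal a \<partial>M)"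
    using g a by (intro nn_integral_mono) (metis e2ennreal_enn2ereal e2ennreal_mono ennreal.rep_eq
        enn2ereal_ennreal ereal_uminus_le_reorder)
  also have "\<dots> = ennreal a" using prob_space.emeasure_space_1[OF M] by simp
  finally have "enn2ereal (\<integral>\<^sup>+x. e2ennreal (- g x) \<partial>M) \<le> ereal a"
    using a by (simp add: less_eq_ennreal.rep_eq)
  then show ?thesis
    unfolding qint_def
    by (cases "enn2ereal (\<integral>\<^sup>+x. e2ennreal (g x) \<partial>M)";
        cases "enn2ereal (\<integral>\<^sup>+x. e2ennreal (- g x) \<partial>M)") auto
qed

lemma qint_affine_le:
  assumes M: "prob_space M" and c: "0 < c" and K: "0 \<le> K" and a: "0 \<le> a"
    and f: "\<And>x. x \<in> space M \<Longrightarrow> f x \<le> ereal c * g x + ereal K"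
    and g: "\<And>x. x \<in> space M \<Longrightarrow> - ereal a \<le> g x"
  shows "qint M f \<le> ereal c * (qint M g + ereal a) + ereal K"
proof -
  have "qint M f \<le> enn2ereal (\<integral>\<^sup>+x. e2ennreal (f x) \<partial>M)" by (rule qint_le_nn_integral_pos)
  also have "\<dots> \<le> enn2ereal (\<integral>\<^sup>+x. ennreal c * e2ennreal (g x) + ennreal K \<partial>M)"
    unfolding less_eq_ennreal.rep_eq[symmetric]
    using f c K by (intro nn_integral_mono e2ennreal_affine_le) auto
  also have "\<dots> \<le> enn2ereal (ennreal c * (\<integral>\<^sup>+x. e2ennreal (g x) \<partial>M) + ennreal K)"
    using nn_integral_affine_le[of "ennreal c" "ennreal K" M "\<lambda>x. e2ennreal (g x)"] c
      prob_space.emeasure_space_1[OF M]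
    by (simp add: less_eq_ennreal.rep_eq[symmetric])
  also have "\<dots> = ereal c * enn2ereal (\<integral>\<^sup>+x. e2ennreal (g x) \<partial>M) + ereal K"
    using c K by (simp add: plus_ennreal.rep_eq times_ennreal.rep_eq)
  also have "\<dots> \<le> ereal c * (qint M g + ereal a) + ereal K"
    using nn_integral_pos_le_qint[OF M a g] c by (intro add_right_mono ereal_mult_left_mono) auto
  finally show ?thesis .
qed

section \<open>Integration in time and over paths\<close>

lemma prob_space_unit_interval: "prob_space (restrict_space lborel {0..1::real})"
  by (rule prob_spaceI) (simp add: space_restrict_space emeasure_restrict_space)

lemma space_path_space: "space path_space = paths"
  unfolding path_space_def canF_def by (simp add: space_measure_of_conv)

lemma in_calP_D:
  assumes "in_calP P \<Sigma>"
  shows "prob_space P" "space P = paths" "\<And>t w. t \<in> {0..1} \<Longrightarrow> w \<in> paths \<Longrightarrow> psd (\<Sigma> t w)"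
  using assms sets_eq_imp_space_eq[of P path_space] by (auto simp: in_calP_def space_path_space)

text \<open>r stands for xi(w), so that the bound is affine in the integrand of J.\<close>
lemma time_integral_xlogx_lambda1_le:
  fixes S2 :: "real \<Rightarrow> real^'d \<Rightarrow> real^'d^'d" and x :: "real \<Rightarrow> real^'d"
    and \<Sigma> :: "real \<Rightarrow> real^'d^'d"
  assumes pointwise:
      "\<And>t. t \<in> {0..1} \<Longrightarrow> pd (S2 t (x t)) \<and> psd (\<Sigma> t) \<and> 0 < l2 t (x t) \<and> l2 t (x t) \<le> b"
    and r: "\<bar>r\<bar> \<le> a"
  defines "E \<equiv> qint (restrict_space lborel {0..1}) (\<lambda>t. ell_tr l2 S2 t (x t) (\<Sigma> t))"
  shows "- ereal a \<le> E + ereal r"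
    and "qint (restrict_space lborel {0..1}) (\<lambda>t. ereal (xlogx (lambda1 S2 t (x t) (\<Sigma> t))))
      \<le> 2 * (E + ereal r) + ereal (exp 1 * b\<^sup>2 + 2 * a)"
proof -
  let ?\<nu> = "restrict_space lborel {0..1::real}"
  have bounds: "0 \<le> ell_tr l2 S2 t (x t) (\<Sigma> t)"
    "ereal (xlogx (lambda1 S2 t (x t) (\<Sigma> t)))
      \<le> ereal 2 * ell_tr l2 S2 t (x t) (\<Sigma> t) + ereal (exp 1 * b\<^sup>2)"
    if "t \<in> space ?\<nu>" for t
    using ell_tr_bounds[of S2 t "x t" "\<Sigma> t" l2 b] pointwise[of t] that by (auto simp: space_restrict_space)
  then have "0 \<le> E" unfolding E_def by (intro qint_nonneg)
  then show "- ereal a \<le> E + ereal r" using r by (cases E) (auto simp: abs_le_iff)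
  let ?F = "qint ?\<nu> (\<lambda>t. ereal (xlogx (lambda1 S2 t (x t) (\<Sigma> t))))"
  have "?F \<le> ereal 2 * (E + ereal 0) + ereal (exp 1 * b\<^sup>2)"
    unfolding E_def using bounds
    by (intro qint_affine_le[OF prob_space_unit_interval]) (auto simp flip: zero_ereal_def)
  also have "\<dots> \<le> 2 * (E + ereal r) + ereal (exp 1 * b\<^sup>2 + 2 * a)"
    using \<open>0 \<le> E\<close> r by (cases E) (auto simp: abs_le_iff)
  finally show "?F \<le> 2 * (E + ereal r) + ereal (exp 1 * b\<^sup>2 + 2 * a)" .
qed

theorem mainTheorem11:
  fixes l2 :: "real \<Rightarrow> real^'d \<Rightarrow> real"
    and S2 :: "real \<Rightarrow> real^'d \<Rightarrow> real^'d^'d"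
    and \<xi> :: "(real \<Rightarrow> real^'d) \<Rightarrow> real"
    and P :: "nat \<Rightarrow> (real \<Rightarrow> real^'d) measure"
    and \<Sigma> :: "nat \<Rightarrow> real \<Rightarrow> (real \<Rightarrow> real^'d) \<Rightarrow> real^'d^'d"
    and bl bu M :: real
  assumes l2_cont: "continuous_on ({0..1} \<times> UNIV) (\<lambda>(t, x). l2 t x)"
    and S2_cont: "continuous_on ({0..1} \<times> UNIV) (\<lambda>(t, x). S2 t x)"
    and S2_pd: "\<forall>t\<in>{0..1}. \<forall>x. pd (S2 t x)"
    and R_consts: "0 < bl" "bl \<le> bu" "0 < M"
    and R_l2: "\<forall>t\<in>{0..1}. \<forall>x. bl \<le> l2 t x \<and> l2 t x \<le> bu"
    and R_S2: "\<forall>t\<in>{0..1}. \<forall>x. \<forall>v. v \<bullet> (S2 t x *v v) \<le> M * (v \<bullet> v)"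
    and xi_meas: "\<xi> \<in> borel_measurable path_space"
    and xi_bdd: "\<exists>K. \<forall>w\<in>paths. \<bar>\<xi> w\<bar> \<le> K"
    and xi_cont: "\<forall>w\<in>paths. \<forall>e>0. \<exists>\<delta>>0. \<forall>v\<in>paths. unif_dist v w < \<delta> \<longrightarrow> \<bar>\<xi> v - \<xi> w\<bar> < e"
    and inP: "\<forall>n\<ge>1. in_calP (P n) (\<Sigma> n)"
    and J_bdd: "\<exists>C::real. \<forall>n\<ge>1. J_obj l2 S2 \<xi> (P n) (\<Sigma> n) \<le> ereal C"
  shows "\<exists>C::real. \<forall>n\<ge>1.
           qint (P n) (\<lambda>w. qint (restrict_space lborel {0..1})
              (\<lambda>t. ereal (xlogx (lambda1 S2 t (w t) (\<Sigma> n t w))))) \<le> ereal C"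
proof -
  obtain C where C: "\<And>n. n \<ge> 1 \<Longrightarrow> J_obj l2 S2 \<xi> (P n) (\<Sigma> n) \<le> ereal C" using J_bdd by blast
  obtain a where a: "\<And>w. w \<in> paths \<Longrightarrow> \<bar>\<xi> w\<bar> \<le> a" "0 \<le> a"
    using xi_bdd by (metis abs_ge_zero max.cobounded1 max.coboundedI2 order_trans)
  let ?K = "exp 1 * bu\<^sup>2 + 2 * a"
  let ?E = "\<lambda>n w. qint (restrict_space lborel {0..1}) (\<lambda>t. ell_tr l2 S2 t (w t) (\<Sigma> n t w))"
  let ?F = "\<lambda>n w. qint (restrict_space lborel {0..1}) (\<lambda>t. ereal (xlogx (lambda1 S2 t (w t) (\<Sigma> n t w))))"
  have "qint (P n) (?F n) \<le> ereal (2 * (C + a) + ?K)" if n: "n \<ge> 1" for n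
  proof -
    note P = in_calP_D[OF inP[rule_format, OF n]]
    have R: "pd (S2 t (w t)) \<and> psd (\<Sigma> n t w) \<and> 0 < l2 t (w t) \<and> l2 t (w t) \<le> bu"
      if "w \<in> paths" "t \<in> {0..1}" for w t
      using S2_pd R_l2 P(3)[OF that(2,1)] R_consts(1) that(2) by (auto intro: less_le_trans)
    have "- ereal a \<le> ?E n w + ereal (\<xi> w)" "?F n w \<le> 2 * (?E n w + ereal (\<xi> w)) + ereal ?K"
      if "w \<in> paths" for w
      using time_integral_xlogx_lambda1_le[of S2 w "\<lambda>t. \<Sigma> n t w" l2 bu "\<xi> w" a, OF R[OF that] a(1)[OF that]]
      by simp_all
    then have "qint (P n) (?F n) \<le> ereal 2 * (J_obj l2 S2 \<xi> (P n) (\<Sigma> n) + ereal a) + ereal ?K"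
      unfolding J_obj_def using a(2) by (intro qint_affine_le[OF P(1)]) (auto simp: P(2))
    also have "\<dots> \<le> ereal 2 * (ereal C + ereal a) + ereal ?K"
      using C[OF n] by (intro add_right_mono ereal_mult_left_mono) auto
    finally show ?thesis by simp
  qed
  then show ?thesis by blast
qed

end
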